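(* Let $G$ be a graph that has a vertex $v$ such that $G-v$ is acyclic. Then for every $k\ge 2$ and every $r\ge 3$, $R_r(\mathcal{B}(G),k)\le 4k|V(G)|+r-2$.
   Context: For a graph $G$, a hypergraph $H$ is a Berge-$G$ hypergraph if there are an injective map $\phi:V(G)\to V(H)$ and pairwise distinct hyperedges $e_{xy}\in E(H)$, one for each $xy\in E(G)$, with $\phi(x),\phi(y)\in e_{xy}$. $\mathcal{B}(G)$ denotes the family of all Berge-$G$ hypergraphs. For a family $\mathcal{H}$ of $r$-uniform hypergraphs, $R_r(\mathcal{H},k)$ is the smallest $n$ such that every $k$-coloring of the hyperedges of the complete $r$-uniform hypergraph $K_n^r$ contains a monochromatic subhypergraph belonging to $\mathcal{H}$. *)

theory Defs
  imports Main
begin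

definition simple_graph :: "'a set \<Rightarrow> 'a set set \<Rightarrow> bool" where
  "simple_graph V E \<longleftrightarrow> finite V \<and> (\<forall>e\<in>E. e \<subseteq> V \<and> card e = 2)"

definition has_cycle :: "'a set \<Rightarrow> 'a set set \<Rightarrow> bool" where
  "has_cycle V E \<longleftrightarrow> (\<exists>xs. length xs \<ge> 3 \<and> distinct xs \<and> set xs \<subseteq> V \<and>
      (\<forall>i<length xs. {xs ! i, xs ! ((i + 1) mod length xs)} \<in> E))"

definition acyclic_graph :: "'a set \<Rightarrow> 'a set set \<Rightarrow> bool" where
  "acyclic_graph V E \<longleftrightarrow> \<not> has_cycle V E"

definition del_vertex_V :: "'a set \<Rightarrow> 'a \<Rightarrow> 'a set" where
  "del_vertex_V V v = V - {v}"

definition del_vertex_E :: "'a set set \<Rightarrow> 'a \<Rightarrow> 'a set set" where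
  "del_vertex_E E v = {e \<in> E. v \<notin> e}"

text \<open>The hypergraph (W, H) contains a Berge copy of the graph (V, E):
  an injection phi of V into W and pairwise distinct hyperedges f e, one per edge e,
  with phi(e) contained in f e.  (The hyperedges f ` E then form a Berge-G subhypergraph.)\<close>
definition contains_berge :: "'a set \<Rightarrow> 'a set set \<Rightarrow> 'b set \<Rightarrow> 'b set set \<Rightarrow> bool" where
  "contains_berge V E W H \<longleftrightarrow> (\<exists>phi f. inj_on phi V \<and> phi ` V \<subseteq> W \<and>
      inj_on f E \<and> f ` E \<subseteq> H \<and> (\<forall>e\<in>E. phi ` e \<subseteq> f e))"

definition berge_arrows :: "nat \<Rightarrow> nat \<Rightarrow> 'a set \<Rightarrow> 'a set set \<Rightarrow> nat \<Rightarrow> bool" where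
  "berge_arrows r k V E n \<longleftrightarrow>
     (\<forall>c :: nat set \<Rightarrow> nat. (\<forall>e. e \<subseteq> {..<n} \<and> card e = r \<longrightarrow> c e < k) \<longrightarrow>
        (\<exists>i<k. contains_berge V E {..<n} {e. e \<subseteq> {..<n} \<and> card e = r \<and> c e = i}))"

definition berge_ramsey :: "nat \<Rightarrow> 'a set \<Rightarrow> 'a set set \<Rightarrow> nat \<Rightarrow> nat" where
  "berge_ramsey r V E k = (LEAST n. berge_arrows r k V E n)"

end

theory Submission
  imports Defs
begin

text \<open>Put r - 2 host vertices into a set T.  Every pair {y, z} of the remaining 4k|V| host vertices
  determines the hyperedge {y, z} \<union> T, so the colouring induces a k-colouring of a complete graph
  on 4k|V| vertices.  Some colour class has average degree above 2|V|, hence a nonempty subgraph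
  of minimum degree above |V|.  The forest G - v embeds into that subgraph greedily, leaf by leaf,
  and each of its vertices u still has a neighbour w u outside the embedding.  The apex v is sent
  into T, which lies in every hyperedge: an edge ab of G - v is carried by {\<phi> a, \<phi> b} \<union> T and an
  edge vu by {\<phi> u, w u} \<union> T; these hyperedges are distinct and all of the chosen colour.\<close>

definition is_path :: "'a set set \<Rightarrow> 'a set \<Rightarrow> 'a list \<Rightarrow> bool" where
  "is_path EF U xs \<longleftrightarrow> xs \<noteq> [] \<and> distinct xs \<and> set xs \<subseteq> U \<and>
     (\<forall>i. Suc i < length xs \<longrightarrow> {xs ! i, xs ! Suc i} \<in> EF)"

lemma longest_path_exists:
  assumes "finite U" and "U \<noteq> {}"
  obtains xs where "is_path EF U xs" and "\<And>ys. is_path EF U ys \<Longrightarrow> length ys \<le> length xs"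
proof -
  obtain u where "u \<in> U" using assms(2) by blast
  then have "is_path EF U [u]" by (simp add: is_path_def)
  moreover have "length ys < Suc (card U)" if "is_path EF U ys" for ys
    using that assms(1) distinct_card card_mono unfolding is_path_def by (metis le_imp_less_Suc)
  ultimately show thesis
    using ex_has_greatest_nat[of "is_path EF U" "[u]" length "Suc (card U)"] that by blast
qed

lemma is_path_Cons:
  assumes "is_path EF U xs" and "z \<notin> set xs" and "z \<in> U" and "{z, hd xs} \<in> EF"
  shows "is_path EF U (z # xs)"
  using assms by (auto simp: is_path_def hd_conv_nth nth_Cons split: nat.split)

lemma path_chord_gives_cycle:
  assumes "is_path EF U xs" and "2 \<le> j" and "j < length xs" and "{xs ! j, hd xs} \<in> EF"
  shows "has_cycle U EF"
  unfolding has_cycle_def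
proof (intro exI conjI allI impI)
  let ?ys = "take (Suc j) xs"
  show "3 \<le> length ?ys" "distinct ?ys" "set ?ys \<subseteq> U"
    using assms(1-3) set_take_subset[of "Suc j" xs] by (auto simp: is_path_def)
  fix i assume "i < length ?ys"
  then consider "i < j" | "i = j" using assms(3) by fastforce
  then show "{?ys ! i, ?ys ! ((i + 1) mod length ?ys)} \<in> EF"
  proof cases
    case 1
    then show ?thesis using assms(1,3) by (simp add: is_path_def)
  next
    case 2
    then show ?thesis using assms(1,3,4) by (simp add: is_path_def hd_conv_nth)
  qed
qed

lemma card_doubleton_eq_2_iff: "card {a, b} = 2 \<longleftrightarrow> a \<noteq> b"
  by (cases "a = b") auto

text \<open>The first vertex of a longest path is a leaf: a second neighbour would either extend the
  path or close a cycle with it.\<close>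
lemma acyclic_graph_has_leaf:
  assumes "finite U" and "U \<noteq> {}" and edges: "\<forall>e\<in>EF. e \<subseteq> U \<and> card e = 2"
    and "acyclic_graph U EF"
  obtains u where "u \<in> U" and "\<And>a b. {u, a} \<in> EF \<Longrightarrow> {u, b} \<in> EF \<Longrightarrow> a = b"
proof (rule ccontr)
  assume no_leaf: "\<not> thesis"
  obtain xs where path: "is_path EF U xs" and longest: "\<And>ys. is_path EF U ys \<Longrightarrow> length ys \<le> length xs"
    using longest_path_exists[OF assms(1,2)] by blast
  let ?y = "hd xs"
  have "?y \<in> U" using path by (auto simp: is_path_def)
  then have "\<exists>a b. {?y, a} \<in> EF \<and> {?y, b} \<in> EF \<and> a \<noteq> b" using no_leaf that by blast
  then obtain z where z: "{?y, z} \<in> EF" and not_next: "2 \<le> length xs \<Longrightarrow> z \<noteq> xs ! 1" by metis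
  have "z \<noteq> ?y" "z \<in> U" using z edges card_doubleton_eq_2_iff by fastforce+
  show False
  proof (cases "z \<in> set xs")
    case False
    then have "is_path EF U (z # xs)"
      using is_path_Cons[OF path] z \<open>z \<in> U\<close> by (simp add: insert_commute)
    then show False using longest by fastforce
  next
    case True
    then obtain j where j: "j < length xs" "xs ! j = z" by (auto simp: in_set_conv_nth)
    have "j \<noteq> 0" using j \<open>z \<noteq> ?y\<close> path by (metis hd_conv_nth is_path_def)
    moreover have "j \<noteq> 1" using j not_next by auto
    ultimately have "has_cycle U EF"
      using path_chord_gives_cycle[OF path _ j(1)] j(2) z by (simp add: insert_commute)
    then show False using assms(4) by (simp add: acyclic_graph_def)
  qed
qed

lemma acyclic_graph_mono:
  "acyclic_graph U EF \<Longrightarrow> U' \<subseteq> U \<Longrightarrow> EF' \<subseteq> EF \<Longrightarrow> acyclic_graph U' EF'"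
  unfolding acyclic_graph_def has_cycle_def by blast

lemma obtain_fresh_neighbour:
  assumes "finite S" and "card S < card {z\<in>D. L y z}"
  obtains z where "z \<in> D" and "L y z" and "z \<notin> S"
proof -
  have "\<not> {z\<in>D. L y z} \<subseteq> S"
  proof
    assume "{z\<in>D. L y z} \<subseteq> S"
    with assms(1) have "card {z\<in>D. L y z} \<le> card S" by (rule card_mono)
    with assms(2) show False by simp
  qed
  then show thesis using that by blast
qed

lemma inj_on_fun_upd_insert:
  assumes "inj_on f A" and "x \<notin> A" and "y \<notin> f ` A"
  shows "inj_on (f(x := y)) (insert x A)"
proof -
  have "inj_on (f(x := y)) A" and "f(x := y) ` A = f ` A"
    using assms(1,2) by (auto simp: inj_on_def)
  then show ?thesis using assms(2,3) by simp
qed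

lemma fun_upd_preserves_adjacency:
  assumes "symp L" and loopless: "\<And>a b. {a, b} \<in> EF \<Longrightarrow> a \<noteq> b"
    and adj: "\<And>a b. {a, b} \<in> EF \<Longrightarrow> u \<notin> {a, b} \<Longrightarrow> L (\<phi> a) (\<phi> b)"
    and adj_u: "\<And>w. {u, w} \<in> EF \<Longrightarrow> L (\<phi> w) z"
    and "{a, b} \<in> EF"
  shows "L ((\<phi>(u := z)) a) ((\<phi>(u := z)) b)"
proof -
  have "a \<noteq> b" using loopless \<open>{a, b} \<in> EF\<close> .
  consider "a = u" | "b = u" | "u \<notin> {a, b}" by blast
  then show ?thesis
  proof cases
    case 1
    then have "L (\<phi> b) z" using adj_u \<open>{a, b} \<in> EF\<close> by simp
    then show ?thesis using 1 \<open>symp L\<close> \<open>a \<noteq> b\<close> by (simp add: sympD)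
  next
    case 2
    then show ?thesis using adj_u[of a] \<open>{a, b} \<in> EF\<close> \<open>a \<noteq> b\<close> by (simp add: insert_commute)
  next
    case 3
    then show ?thesis using adj \<open>{a, b} \<in> EF\<close> by auto
  qed
qed

text \<open>The leaf u is sent to an unused neighbour of the image of its unique neighbour; the image
  of U - {u} is too small to contain all of them.\<close>
lemma embedding_extends_to_leaf:
  assumes "finite U" and "u \<in> U" and edges: "\<forall>e\<in>EF. e \<subseteq> U \<and> card e = 2"
    and leaf: "\<And>a b. {u, a} \<in> EF \<Longrightarrow> {u, b} \<in> EF \<Longrightarrow> a = b"
    and "D \<noteq> {}" and "symp L" and min_degree: "\<And>y. y \<in> D \<Longrightarrow> card U \<le> card {z\<in>D. L y z}"
    and inj: "inj_on \<phi> (U - {u})" and into: "\<phi> ` (U - {u}) \<subseteq> D"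
    and adj: "\<And>a b. {a, b} \<in> EF \<Longrightarrow> u \<notin> {a, b} \<Longrightarrow> L (\<phi> a) (\<phi> b)"
  obtains \<psi> where "inj_on \<psi> U" and "\<psi> ` U \<subseteq> D" and "\<And>a b. {a, b} \<in> EF \<Longrightarrow> L (\<psi> a) (\<psi> b)"
proof -
  let ?U = "U - {u}"
  have loopless: "a \<noteq> b" if "{a, b} \<in> EF" for a b
  proof -
    have "card {a, b} = 2" using that edges by blast
    then show ?thesis by (simp add: card_doubleton_eq_2_iff)
  qed
  obtain y where "y \<in> D" and y_nbr: "\<And>w. {u, w} \<in> EF \<Longrightarrow> y = \<phi> w"
  proof (cases "\<exists>w. {u, w} \<in> EF")
    case True
    then obtain w where w: "{u, w} \<in> EF" by blast
    then have "w \<in> ?U" using edges loopless by blast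
    then have "\<phi> w \<in> D" using into by blast
    moreover have "\<phi> w = \<phi> w'" if "{u, w'} \<in> EF" for w'
      using leaf[OF w that] by simp
    ultimately show thesis by (rule that)
  next
    case False
    obtain y where "y \<in> D" using \<open>D \<noteq> {}\<close> by blast
    with False show thesis by (intro that) auto
  qed
  have "card (\<phi> ` ?U) < card U"
    using card_image_le[of ?U \<phi>] card_Diff1_less[OF \<open>finite U\<close> \<open>u \<in> U\<close>] \<open>finite U\<close> by simp
  then have small: "card (\<phi> ` ?U) < card {z\<in>D. L y z}"
    using min_degree[OF \<open>y \<in> D\<close>] by linarith
  have "finite (\<phi> ` ?U)" using \<open>finite U\<close> by simp
  then obtain z where "z \<in> D" "L y z" "z \<notin> \<phi> ` ?U"
    using small by (rule obtain_fresh_neighbour)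
  then have z_adj: "L (\<phi> w) z" if "{u, w} \<in> EF" for w
    using y_nbr[OF that] by simp
  show thesis
  proof (rule that)
    have "inj_on (\<phi>(u := z)) (insert u ?U)"
      using \<open>z \<notin> \<phi> ` ?U\<close> by (intro inj_on_fun_upd_insert[OF inj]) simp_all
    then show "inj_on (\<phi>(u := z)) U" using \<open>u \<in> U\<close> by (simp add: insert_absorb)
    show "\<phi>(u := z) ` U \<subseteq> D" using into \<open>z \<in> D\<close> by (auto simp: image_subset_iff)
    show "L ((\<phi>(u := z)) a) ((\<phi>(u := z)) b)" if "{a, b} \<in> EF" for a b
      using fun_upd_preserves_adjacency[OF \<open>symp L\<close> loopless adj z_adj that] .
  qed
qed

lemma forest_embeds_into_min_degree_graph:
  assumes "finite U" and "\<forall>e\<in>EF. e \<subseteq> U \<and> card e = 2" and "acyclic_graph U EF"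
    and "finite D" and "D \<noteq> {}" and "symp L"
    and min_degree: "\<And>y. y \<in> D \<Longrightarrow> card U \<le> card {z\<in>D. L y z}"
  obtains \<phi> where "inj_on \<phi> U" and "\<phi> ` U \<subseteq> D" and "\<And>a b. {a, b} \<in> EF \<Longrightarrow> L (\<phi> a) (\<phi> b)"
  using assms(1-3) min_degree
proof (induction "card U" arbitrary: U EF thesis)
  case 0
  then have "U = {}" by simp
  moreover have "EF = {}" using "0.prems"(3) calculation by force
  ultimately show ?case using "0.prems"(1) by simp
next
  case (Suc m)
  have "U \<noteq> {}" using Suc.hyps(2) by auto
  then obtain u where "u \<in> U" and leaf: "\<And>a b. {u, a} \<in> EF \<Longrightarrow> {u, b} \<in> EF \<Longrightarrow> a = b"
    using acyclic_graph_has_leaf[OF Suc.prems(2) _ Suc.prems(3,4)] by blast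
  let ?U = "U - {u}" and ?EF = "{e\<in>EF. u \<notin> e}"
  have card_U: "card ?U = m" using Suc.hyps(2) \<open>u \<in> U\<close> by simp
  obtain \<phi> where inj: "inj_on \<phi> ?U" and into: "\<phi> ` ?U \<subseteq> D"
    and adj: "\<And>a b. {a, b} \<in> ?EF \<Longrightarrow> L (\<phi> a) (\<phi> b)"
  proof (rule Suc.hyps(1)[OF card_U[symmetric]])
    show "finite ?U" "\<forall>e\<in>?EF. e \<subseteq> ?U \<and> card e = 2" using Suc.prems(2,3) by auto
    show "acyclic_graph ?U ?EF" using Suc.prems(4) by (rule acyclic_graph_mono) auto
    show "card ?U \<le> card {z\<in>D. L y z}" if "y \<in> D" for y
      using Suc.prems(5)[OF that] card_U Suc.hyps(2) by linarith
  qed blast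
  have "L (\<phi> a) (\<phi> b)" if "{a, b} \<in> EF" "u \<notin> {a, b}" for a b
    using that adj by simp
  with Suc.prems(2) \<open>u \<in> U\<close> Suc.prems(3) leaf \<open>D \<noteq> {}\<close> \<open>symp L\<close> Suc.prems(5) inj into
  show ?case by (rule embedding_extends_to_leaf) (assumption | rule Suc.prems(1))+
qed

lemma forest_embeds_with_fresh_neighbours:
  assumes "finite U" and "\<forall>e\<in>EF. e \<subseteq> U \<and> card e = 2" and "acyclic_graph U EF"
    and "finite D" and "D \<noteq> {}" and "symp L"
    and min_degree: "\<And>y. y \<in> D \<Longrightarrow> card U < card {z\<in>D. L y z}"
  obtains \<phi> w where "inj_on \<phi> U" and "\<phi> ` U \<subseteq> D" and "\<And>a b. {a, b} \<in> EF \<Longrightarrow> L (\<phi> a) (\<phi> b)"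
    and "\<And>u. u \<in> U \<Longrightarrow> w u \<in> D" and "\<And>u. u \<in> U \<Longrightarrow> w u \<notin> \<phi> ` U"
    and "\<And>u. u \<in> U \<Longrightarrow> L (\<phi> u) (w u)"
proof -
  obtain \<phi> where inj: "inj_on \<phi> U" and into: "\<phi> ` U \<subseteq> D"
    and adj: "\<And>a b. {a, b} \<in> EF \<Longrightarrow> L (\<phi> a) (\<phi> b)"
  proof (rule forest_embeds_into_min_degree_graph[OF assms(1-6)])
    show "card U \<le> card {z\<in>D. L y z}" if "y \<in> D" for y
      using min_degree[OF that] by simp
  qed blast
  have "\<forall>u\<in>U. \<exists>z. z \<in> D \<and> L (\<phi> u) z \<and> z \<notin> \<phi> ` U"
  proof
    fix u assume "u \<in> U"
    then have "card (\<phi> ` U) < card {z\<in>D. L (\<phi> u) z}"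
      using card_image_le[OF assms(1), of \<phi>] min_degree into by fastforce
    with finite_imageI[OF assms(1)] obtain z where "z \<in> D" "L (\<phi> u) z" "z \<notin> \<phi> ` U"
      by (rule obtain_fresh_neighbour)
    then show "\<exists>z. z \<in> D \<and> L (\<phi> u) z \<and> z \<notin> \<phi> ` U" by blast
  qed
  then obtain w where w: "\<forall>u\<in>U. w u \<in> D \<and> L (\<phi> u) (w u) \<and> w u \<notin> \<phi> ` U"
    by (rule bchoice[THEN exE])
  show thesis by (rule that[OF inj into adj]) (use w in auto)
qed

lemma degree_sum_le_degree_sum_Diff:
  assumes "finite W" and "symp L" and "y \<in> W"
  shows "(\<Sum>a\<in>W. card {z\<in>W. L a z})
    \<le> (\<Sum>a\<in>W - {y}. card {z\<in>W - {y}. L a z}) + 2 * card {z\<in>W. L y z}"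
proof -
  let ?W = "W - {y}"
  have "card {z\<in>W. L a z} \<le> card {z\<in>?W. L a z} + of_bool (L a y)" for a
  proof -
    have "{z\<in>W. L a z} \<subseteq> {z\<in>?W. L a z} \<union> {z\<in>{y}. L a z}" by blast
    then have "card {z\<in>W. L a z} \<le> card ({z\<in>?W. L a z} \<union> {z\<in>{y}. L a z})"
      using assms(1) by (intro card_mono) auto
    also have "\<dots> \<le> card {z\<in>?W. L a z} + card {z\<in>{y}. L a z}" by (rule card_Un_le)
    also have "card {z\<in>{y}. L a z} = of_bool (L a y)" by (cases "L a y") (simp_all add: Collect_conj_eq)
    finally show ?thesis .
  qed
  then have "(\<Sum>a\<in>?W. card {z\<in>W. L a z}) \<le> (\<Sum>a\<in>?W. card {z\<in>?W. L a z} + of_bool (L a y))"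
    by (rule sum_mono)
  also have "\<dots> = (\<Sum>a\<in>?W. card {z\<in>?W. L a z}) + card (?W \<inter> {a. L a y})"
    using assms(1) by (simp add: sum.distrib)
  finally have "(\<Sum>a\<in>?W. card {z\<in>W. L a z}) \<le> (\<Sum>a\<in>?W. card {z\<in>?W. L a z}) + card (?W \<inter> {a. L a y})" .
  moreover have "?W \<inter> {a. L a y} \<subseteq> {z\<in>W. L y z}" using assms(2) by (auto dest: sympD)
  then have "card (?W \<inter> {a. L a y}) \<le> card {z\<in>W. L y z}" using assms(1) by (intro card_mono) auto
  moreover have "(\<Sum>a\<in>W. card {z\<in>W. L a z}) = card {z\<in>W. L y z} + (\<Sum>a\<in>?W. card {z\<in>W. L a z})"
    using assms(1,3) by (simp add: sum.remove)
  ultimately show ?thesis by linarith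
qed

text \<open>Repeatedly deleting a vertex of degree at most d removes at most 2d from the degree sum,
  so the process stops before the graph is empty.\<close>
lemma subgraph_with_min_degree:
  assumes "finite W" and "symp L" and "2 * d * card W < (\<Sum>y\<in>W. card {z\<in>W. L y z})"
  obtains D where "D \<subseteq> W" and "D \<noteq> {}" and "\<And>y. y \<in> D \<Longrightarrow> d < card {z\<in>D. L y z}"
  using assms(1,3)
proof (induction "card W" arbitrary: W thesis)
  case 0
  then show ?case by simp
next
  case (Suc m)
  show ?case
  proof (cases "\<forall>y\<in>W. d < card {z\<in>W. L y z}")
    case True
    then show ?thesis using Suc.prems(1) Suc.hyps(2) by fastforce
  next
    case False
    then obtain y where y: "y \<in> W" "card {z\<in>W. L y z} \<le> d" by (auto simp: not_less)
    have "card (W - {y}) = m" using Suc.hyps(2) y(1) by simp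
    moreover have "2 * d * card (W - {y}) < (\<Sum>a\<in>W - {y}. card {z\<in>W - {y}. L a z})"
    proof -
      have "2 * d * card W = 2 * d * card (W - {y}) + 2 * d"
        using Suc.hyps(2) \<open>card (W - {y}) = m\<close> by (metis add.commute mult_Suc_right)
      then show ?thesis
        using degree_sum_le_degree_sum_Diff[OF Suc.prems(2) assms(2) y(1)] Suc.prems(3) y(2) by linarith
    qed
    ultimately obtain D where "D \<subseteq> W - {y}" "D \<noteq> {}" "\<And>y. y \<in> D \<Longrightarrow> d < card {z\<in>D. L y z}"
      using Suc.hyps(1)[of "W - {y}"] Suc.prems(2) by blast
    then show ?thesis using Suc.prems(1)[of D] by blast
  qed
qed

lemma card_eq_sum_card_colour_classes:
  assumes "finite A" and "\<And>z. z \<in> A \<Longrightarrow> g z < (k::nat)"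
  shows "card A = (\<Sum>i<k. card {z\<in>A. g z = i})"
proof -
  have "A = (\<Union>i<k. {z\<in>A. g z = i})" using assms(2) by blast
  also have "card \<dots> = (\<Sum>i<k. card {z\<in>A. g z = i})"
    using assms(1) by (intro card_UN_disjoint) auto
  finally show ?thesis .
qed

lemma colour_class_with_large_degree_sum:
  assumes "finite W" and colours: "\<And>y z. y \<in> W \<Longrightarrow> z \<in> W \<Longrightarrow> y \<noteq> z \<Longrightarrow> col y z < k"
    and "2 * k * d < card W - 1"
  obtains i where "i < k" and "2 * d * card W < (\<Sum>y\<in>W. card {z\<in>W. z \<noteq> y \<and> col y z = i})"
proof -
  let ?deg = "\<lambda>i y. card {z\<in>W. z \<noteq> y \<and> col y z = i}"
  have "\<exists>i<k. 2 * d * card W < (\<Sum>y\<in>W. ?deg i y)"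
  proof (rule ccontr)
    assume "\<not> ?thesis"
    then have sparse: "\<forall>i<k. (\<Sum>y\<in>W. ?deg i y) \<le> 2 * d * card W" by (meson not_less)
    have "card W * (card W - 1) = (\<Sum>y\<in>W. card (W - {y}))"
      using assms(1) by simp
    also have "\<dots> = (\<Sum>y\<in>W. \<Sum>i<k. ?deg i y)"
    proof (rule sum.cong)
      fix y assume "y \<in> W"
      then have "card (W - {y}) = (\<Sum>i<k. card {z\<in>W - {y}. col y z = i})"
        using assms(1) colours by (intro card_eq_sum_card_colour_classes) auto
      also have "\<dots> = (\<Sum>i<k. ?deg i y)"
        by (intro sum.cong refl arg_cong[where f = card]) blast
      finally show "card (W - {y}) = (\<Sum>i<k. ?deg i y)" .
    qed simp
    also have "\<dots> = (\<Sum>i<k. \<Sum>y\<in>W. ?deg i y)"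
      by (rule sum.swap)
    also have "\<dots> \<le> (\<Sum>i<k. 2 * d * card W)"
      using sparse by (intro sum_mono) simp
    also have "\<dots> = card W * (2 * k * d)" by simp
    finally have "card W - 1 \<le> 2 * k * d"
      using assms(3) by (simp add: mult_le_cancel1)
    then show False using assms(3) by linarith
  qed
  then show thesis using that by blast
qed

lemma monochromatic_subgraph_with_min_degree:
  assumes "finite W" and "\<And>y z. col y z = col z y"
    and "\<And>y z. y \<in> W \<Longrightarrow> z \<in> W \<Longrightarrow> y \<noteq> z \<Longrightarrow> col y z < k"
    and "2 * k * d < card W - 1"
  obtains i D where "i < k" and "D \<subseteq> W" and "D \<noteq> {}"
    and "\<And>y. y \<in> D \<Longrightarrow> d < card {z\<in>D. z \<noteq> y \<and> col y z = i}"
proof -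
  obtain i where "i < k" and "2 * d * card W < (\<Sum>y\<in>W. card {z\<in>W. z \<noteq> y \<and> col y z = i})"
    using assms(1,3,4) by (rule colour_class_with_large_degree_sum)
  moreover have "symp (\<lambda>y z. z \<noteq> y \<and> col y z = i)"
    using assms(2) by (auto intro: sympI)
  ultimately obtain D where "D \<subseteq> W" and "D \<noteq> {}"
    and "\<And>y. y \<in> D \<Longrightarrow> d < card {z\<in>D. z \<noteq> y \<and> col y z = i}"
    using subgraph_with_min_degree[OF assms(1)] by blast
  with \<open>i < k\<close> show thesis by (rule that)
qed

lemma simple_graph_edge_at:
  assumes "simple_graph V E" and "e \<in> E" and "v \<in> e"
  obtains u where "e = {v, u}" and "u \<in> V - {v}"
proof -
  obtain a b where "e = {a, b}" "a \<noteq> b" "e \<subseteq> V"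
    using assms(1,2) card_2_iff unfolding simple_graph_def by metis
  with assms(3) show thesis by (auto intro: that)
qed

text \<open>The host vertices whose hyperedge, together with the fixed set T, carries the edge e of G.\<close>
definition carrier_pair :: "'a \<Rightarrow> ('a \<Rightarrow> 'b) \<Rightarrow> ('a \<Rightarrow> 'b) \<Rightarrow> 'a set \<Rightarrow> 'b set" where
  "carrier_pair v \<phi> w e =
     (if v \<in> e then {\<phi> (the_elem (e - {v})), w (the_elem (e - {v}))} else \<phi> ` e)"

lemma carrier_pair_apex: "u \<noteq> v \<Longrightarrow> carrier_pair v \<phi> w {v, u} = {\<phi> u, w u}"
  by (simp add: carrier_pair_def insert_Diff_if)

lemma carrier_pair_avoiding: "v \<notin> e \<Longrightarrow> carrier_pair v \<phi> w e = \<phi> ` e"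
  by (simp add: carrier_pair_def)

text \<open>Pairs of edges avoiding v lie inside the image of \<phi>; the pair of {v, u} meets it exactly
  in \<phi> u and sticks out of it at w u.\<close>
lemma inj_on_carrier_pair:
  assumes G: "simple_graph V E" and inj: "inj_on \<phi> (V - {v})"
    and fresh: "\<And>u. u \<in> V - {v} \<Longrightarrow> w u \<notin> \<phi> ` (V - {v})"
  shows "inj_on (carrier_pair v \<phi> w) E"
proof (rule inj_onI)
  let ?U = "V - {v}" and ?P = "carrier_pair v \<phi> w"
  have apex: "?P e \<inter> \<phi> ` ?U = {\<phi> u} \<and> \<not> ?P e \<subseteq> \<phi> ` ?U"
    if "e = {v, u}" "u \<in> ?U" for e u
    using that fresh[of u] carrier_pair_apex[of u v \<phi> w] by auto
  have avoiding: "e \<subseteq> ?U \<and> ?P e \<subseteq> \<phi> ` ?U" if "e \<in> E" "v \<notin> e" for e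
    using that G carrier_pair_avoiding[of v e \<phi> w] by (auto simp: simple_graph_def)
  fix e e' assume e: "e \<in> E" and e': "e' \<in> E" and eq: "?P e = ?P e'"
  show "e = e'"
  proof (cases "v \<in> e"; cases "v \<in> e'")
    assume "v \<in> e" "v \<in> e'"
    obtain u u' where "e = {v, u}" "u \<in> ?U" "e' = {v, u'}" "u' \<in> ?U"
      using simple_graph_edge_at[OF G e \<open>v \<in> e\<close>] simple_graph_edge_at[OF G e' \<open>v \<in> e'\<close>] by metis
    moreover from this have "\<phi> u = \<phi> u'" using apex eq by (metis singleton_inject)
    ultimately show ?thesis using inj by (metis inj_onD)
  next
    assume "v \<in> e" "v \<notin> e'"
    then show ?thesis using simple_graph_edge_at[OF G e] apex avoiding[OF e'] eq by metis
  next
    assume "v \<notin> e" "v \<in> e'"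
    then show ?thesis using simple_graph_edge_at[OF G e'] apex avoiding[OF e] eq by metis
  next
    assume "v \<notin> e" "v \<notin> e'"
    then show ?thesis using avoiding[OF e] avoiding[OF e'] eq inj_on_image_eq_iff[OF inj]
      carrier_pair_avoiding[of v _ \<phi> w] by metis
  qed
qed

lemma berge_copy_from_min_degree:
  assumes G: "simple_graph V E" and "v \<in> V"
    and forest: "acyclic_graph (del_vertex_V V v) (del_vertex_E E v)"
    and "finite D" and "D \<noteq> {}" and "symp L"
    and min_degree: "\<And>y. y \<in> D \<Longrightarrow> card V \<le> card {z\<in>D. L y z}"
    and "D \<inter> T = {}" and "t \<in> T" and "D \<union> T \<subseteq> X"
    and hyperedges: "\<And>y z. y \<in> D \<Longrightarrow> z \<in> D \<Longrightarrow> L y z \<Longrightarrow> {y, z} \<union> T \<in> H"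
  shows "contains_berge V E X H"
proof -
  let ?U = "V - {v}" and ?EF = "del_vertex_E E v"
  have "finite V" and edges: "\<forall>e\<in>E. e \<subseteq> V \<and> card e = 2"
    using G by (auto simp: simple_graph_def)
  have "card ?U < card V" using \<open>finite V\<close> \<open>v \<in> V\<close> by (rule card_Diff1_less)
  obtain \<phi> w where inj: "inj_on \<phi> ?U" and into: "\<phi> ` ?U \<subseteq> D"
    and adj: "\<And>a b. {a, b} \<in> ?EF \<Longrightarrow> L (\<phi> a) (\<phi> b)"
    and w_in: "\<And>u. u \<in> ?U \<Longrightarrow> w u \<in> D" and w_fresh: "\<And>u. u \<in> ?U \<Longrightarrow> w u \<notin> \<phi> ` ?U"
    and w_adj: "\<And>u. u \<in> ?U \<Longrightarrow> L (\<phi> u) (w u)"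
  proof (rule forest_embeds_with_fresh_neighbours)
    show "finite ?U" "\<forall>e\<in>?EF. e \<subseteq> ?U \<and> card e = 2" using \<open>finite V\<close> edges
      by (auto simp: del_vertex_E_def)
    show "acyclic_graph ?U ?EF" using forest by (simp add: del_vertex_V_def)
    show "card ?U < card {z\<in>D. L y z}" if "y \<in> D" for y
      using min_degree[OF that] \<open>card ?U < card V\<close> by linarith
  qed (use assms(4-6) in blast)+
  let ?P = "carrier_pair v \<phi> w" and ?\<Phi> = "\<phi>(v := t)"
  have hyperedge: "?P e \<union> T \<in> H \<and> ?P e \<subseteq> D \<and> ?\<Phi> ` e \<subseteq> ?P e \<union> T" if e: "e \<in> E" for e
  proof (cases "v \<in> e")
    case True
    then obtain u where "e = {v, u}" "u \<in> ?U" using simple_graph_edge_at[OF G e] by blast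
    then show ?thesis using carrier_pair_apex[of u v \<phi> w] hyperedges[of "\<phi> u" "w u"]
      into w_in w_adj \<open>t \<in> T\<close> by auto
  next
    case False
    have "card e = 2" using e edges by blast
    then obtain a b where "e = {a, b}" by (meson card_2_iff)
    moreover have "e \<in> ?EF" "e \<subseteq> ?U" using e edges False by (auto simp: del_vertex_E_def)
    ultimately show ?thesis using False carrier_pair_avoiding[of v e \<phi> w] hyperedges[of "\<phi> a" "\<phi> b"]
      adj[of a b] into by auto
  qed
  have "inj_on (\<lambda>e. ?P e \<union> T) E"
  proof (rule inj_onI)
    fix e e' assume "e \<in> E" "e' \<in> E" "?P e \<union> T = ?P e' \<union> T"
    moreover from this have "?P e = ?P e'" using hyperedge \<open>D \<inter> T = {}\<close> by blast
    ultimately show "e = e'" using inj_on_carrier_pair[OF G inj w_fresh] by (meson inj_onD)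
  qed
  moreover have "inj_on ?\<Phi> V"
  proof -
    have "t \<notin> \<phi> ` ?U" using into \<open>t \<in> T\<close> \<open>D \<inter> T = {}\<close> by blast
    then have "inj_on ?\<Phi> (insert v ?U)" by (intro inj_on_fun_upd_insert[OF inj]) simp_all
    then show ?thesis using \<open>v \<in> V\<close> by (simp add: insert_absorb)
  qed
  moreover have "?\<Phi> ` V \<subseteq> X"
    using into \<open>t \<in> T\<close> \<open>D \<union> T \<subseteq> X\<close> by (auto simp: image_subset_iff)
  ultimately show ?thesis
    unfolding contains_berge_def using hyperedge
    by (intro exI[of _ ?\<Phi>] exI[of _ "\<lambda>e. ?P e \<union> T"] conjI ballI) auto
qed

lemma berge_arrows_apex_forest:
  assumes G: "simple_graph V E" and "v \<in> V"
    and forest: "acyclic_graph (del_vertex_V V v) (del_vertex_E E v)"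
    and "1 \<le> k" and "3 \<le> r"
  shows "berge_arrows r k V E (4 * k * card V + r - 2)"
  unfolding berge_arrows_def
proof (intro allI impI)
  let ?n = "4 * k * card V + r - 2"
  fix c :: "nat set \<Rightarrow> nat"
  assume colouring: "\<forall>e. e \<subseteq> {..<?n} \<and> card e = r \<longrightarrow> c e < k"
  define T where "T = {..<r - 2}"
  define W where "W = {r - 2..<?n}"
  define col where "col y z = c ({y, z} \<union> T)" for y z
  have hyperedge: "{y, z} \<union> T \<subseteq> {..<?n}" "card ({y, z} \<union> T) = r"
    if "y \<in> W" "z \<in> W" "y \<noteq> z" for y z
    using that \<open>3 \<le> r\<close> by (auto simp: T_def W_def card_insert_if)
  have "0 < card V" using G \<open>v \<in> V\<close> by (auto simp: simple_graph_def card_gt_0_iff)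
  then have "0 < k * card V" using \<open>1 \<le> k\<close> by simp
  moreover have "card W = 4 * (k * card V)" using \<open>3 \<le> r\<close> by (simp add: W_def)
  ultimately have "2 * k * card V < card W - 1" by linarith
  then obtain i D where "i < k" and "D \<subseteq> W" and "D \<noteq> {}"
    and min_degree: "\<And>y. y \<in> D \<Longrightarrow> card V < card {z\<in>D. z \<noteq> y \<and> col y z = i}"
    using monochromatic_subgraph_with_min_degree[of W col k "card V"] colouring hyperedge
    by (auto simp: W_def col_def insert_commute)
  have "contains_berge V E {..<?n} {e. e \<subseteq> {..<?n} \<and> card e = r \<and> c e = i}"
  proof (rule berge_copy_from_min_degree[OF G \<open>v \<in> V\<close> forest, where L = "\<lambda>y z. z \<noteq> y \<and> col y z = i"])
    show "finite D" using \<open>D \<subseteq> W\<close> finite_subset by (auto simp: W_def)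
    show "symp (\<lambda>y z. z \<noteq> y \<and> col y z = i)" by (auto intro: sympI simp: col_def insert_commute)
    show "card V \<le> card {z\<in>D. z \<noteq> y \<and> col y z = i}" if "y \<in> D" for y
      using min_degree[OF that] by simp
    show "D \<inter> T = {}" "r - 3 \<in> T" "D \<union> T \<subseteq> {..<?n}"
      using \<open>D \<subseteq> W\<close> \<open>3 \<le> r\<close> by (auto simp: T_def W_def)
    show "{y, z} \<union> T \<in> {e. e \<subseteq> {..<?n} \<and> card e = r \<and> c e = i}"
      if "y \<in> D" "z \<in> D" "z \<noteq> y \<and> col y z = i" for y z
      using hyperedge[of y z] that \<open>D \<subseteq> W\<close> by (auto simp: col_def)
  qed fact
  then show "\<exists>i<k. contains_berge V E {..<?n} {e. e \<subseteq> {..<?n} \<and> card e = r \<and> c e = i}"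
    using \<open>i < k\<close> by blast
qed

theorem corollary3:
  fixes V :: "'a set" and E :: "'a set set" and v :: 'a and k r :: nat
  assumes "simple_graph V E"
    and "v \<in> V"
    and "acyclic_graph (del_vertex_V V v) (del_vertex_E E v)"
    and "k \<ge> 2" and "r \<ge> 3"
  shows "berge_ramsey r V E k \<le> 4 * k * card V + r - 2"
proof -
  have "berge_arrows r k V E (4 * k * card V + r - 2)"
    using assms by (intro berge_arrows_apex_forest) auto
  then show ?thesis unfolding berge_ramsey_def by (rule Least_le)
qed

end
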